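(* Let $h>0$, $r_0>0$, $a_1>|a_2|$, and let $A,B,c_0,C_0$ be as in the context. Fix $\rho_0>0$ and $\beta\in\big(0,\frac{h^2+h\sqrt{h^2+r_0^2}}{r_0^2+h^2+h\sqrt{h^2+r_0^2}}\big)$ (note this ratio equals $c_0/C_0$). For $n\in\mathbb N$ let $P_1^0,P_2^0\in\mathbb R^2$ (possibly depending on $n$) satisfy $|P_1^0-P_2^0|=4\rho_0/n$, put $\rho=\beta\rho_0/n$, let $x(t)$ be the solution of $\dot x=\nabla^\perp\mathcal H(x)$ with $x(0)=DT(x_0)(P_1^0-P_2^0)$, let $E=\mathcal H(x(0))$, and $C_E=\exp\big(\frac{2E}{(a_1+a_2)A}\big)$. Then for every $k\in\mathbb N$ there exists $N_0$ such that for all $n>N_0$: $C_E<C^*$, the solution $x(t)$ is periodic with some period $T_E>0$, and with $T=(k+1)T_E$, $$\min_{t\in[0,T]}|DT(x_0)^{-1}x(t)|\ \ge\ 4\rho.$$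
   Context: Let $g(s)=\frac{1}{2(h\sqrt{s+h^2}+h^2)}$, $\tau(s)=\exp(\int_0^sg(z)dz)$, $T(x)=\tau(|x|^2)x$ for $x\in\mathbb R^2$, $x_0=(r_0,0)$, so $DT(x_0)=\tau(r_0^2)\,\mathrm{diag}\big(1+\frac{r_0^2}{h^2+h\sqrt{h^2+r_0^2}},\,1\big)$. Let $c_0=\tau(r_0^2)$ and $C_0=\tau(r_0^2)\big(1+\frac{r_0^2}{h^2+h\sqrt{h^2+r_0^2}}\big)$. Let $A=\frac{\sqrt{h^2+r_0^2}\,(r_0^2+h^2+h\sqrt{h^2+r_0^2})}{2\pi h\,(h^2+h\sqrt{h^2+r_0^2})}$ and $B=\frac{\tau(r_0^2)r_0}{4\pi h\sqrt{h^2+r_0^2}}$. For two points $\tilde P_1,\tilde P_2$ solving $\dot{\tilde P}_1=Aa_2\frac{(\tilde P_1-\tilde P_2)^\perp}{|\tilde P_1-\tilde P_2|^2}-a_1B(0,1)^T$, $\dot{\tilde P}_2=Aa_1\frac{(\tilde P_2-\tilde P_1)^\perp}{|\tilde P_1-\tilde P_2|^2}-a_2B(0,1)^T$ (with $a^\perp=(-a_2,a_1)$), the difference $x=\tilde P_1-\tilde P_2$ solves the Hamiltonian system $\dot x=\nabla^\perp\mathcal H(x)$ with $\mathcal H(x)=(a_1+a_2)A\ln|x|-(a_1-a_2)Bx_1$, $x=(x_1,x_2)$. Let $a'=\frac{(a_1+a_2)A}{2(a_1-a_2)B}$, so $\mathcal H$ has a unique critical point $x^*=(2a',0)$, and $C^*=(2a'/e)^2$.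 The relation $P_1(t)-P_2(t)=DT(x_0)^{-1}x(t)$ holds. *)

theory Defs
  imports "HOL-Analysis.Analysis"
begin

definition g_fun :: "real \<Rightarrow> real \<Rightarrow> real" where
  "g_fun h s = 1 / (2 * (h * sqrt (s + h^2) + h^2))"

definition tau :: "real \<Rightarrow> real \<Rightarrow> real" where
  "tau h s = exp (integral {0..s} (g_fun h))"

definition c0 :: "real \<Rightarrow> real \<Rightarrow> real" where
  "c0 h r0 = tau h (r0^2)"

definition C0 :: "real \<Rightarrow> real \<Rightarrow> real" where
  "C0 h r0 = tau h (r0^2) * (1 + r0^2 / (h^2 + h * sqrt (h^2 + r0^2)))"

definition DT :: "real \<Rightarrow> real \<Rightarrow> real \<times> real \<Rightarrow> real \<times> real" where
  "DT h r0 y = (C0 h r0 * fst y, c0 h r0 * snd y)"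

definition DT_inv :: "real \<Rightarrow> real \<Rightarrow> real \<times> real \<Rightarrow> real \<times> real" where
  "DT_inv h r0 y = (fst y / C0 h r0, snd y / c0 h r0)"

definition A_const :: "real \<Rightarrow> real \<Rightarrow> real" where
  "A_const h r0 = sqrt (h^2 + r0^2) * (r0^2 + h^2 + h * sqrt (h^2 + r0^2))
      / (2 * pi * h * (h^2 + h * sqrt (h^2 + r0^2)))"

definition B_const :: "real \<Rightarrow> real \<Rightarrow> real" where
  "B_const h r0 = tau h (r0^2) * r0 / (4 * pi * h * sqrt (h^2 + r0^2))"

definition Ham :: "real \<Rightarrow> real \<Rightarrow> real \<Rightarrow> real \<Rightarrow> real \<times> real \<Rightarrow> real" where
  "Ham h r0 a1 a2 x = (a1 + a2) * A_const h r0 * ln (norm x) - (a1 - a2) * B_const h r0 * fst x"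

definition Ham_field :: "real \<Rightarrow> real \<Rightarrow> real \<Rightarrow> real \<Rightarrow> real \<times> real \<Rightarrow> real \<times> real" where
  "Ham_field h r0 a1 a2 x =
     (- ((a1 + a2) * A_const h r0 * snd x / (norm x)^2),
      (a1 + a2) * A_const h r0 * fst x / (norm x)^2 - (a1 - a2) * B_const h r0)"

definition a_prime :: "real \<Rightarrow> real \<Rightarrow> real \<Rightarrow> real \<Rightarrow> real" where
  "a_prime h r0 a1 a2 = (a1 + a2) * A_const h r0 / (2 * (a1 - a2) * B_const h r0)"

definition C_star :: "real \<Rightarrow> real \<Rightarrow> real \<Rightarrow> real \<Rightarrow> real" where
  "C_star h r0 a1 a2 = (2 * a_prime h r0 a1 a2 / exp 1)^2"

end

theory Submission
  imports Defs
begin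

(* With a = (a1 + a2) A and b = (a1 - a2) B the relative position y of the two vortices follows
   the Hamiltonian flow of H(y) = a ln|y| - b y1.  When |y(0)| = O(1/n), the energy level lies far
   below the values of H on the circle |y| = a/(2b) = a', so conservation of H traps the orbit in
   an annulus around 0 inside that circle.  There the polar angle grows at a rate bounded below,
   so the orbit meets its initial ray again; H is strictly increasing along rays inside the circle,
   hence it meets the ray at the initial point, and Lipschitz uniqueness makes the motion periodic.
   Comparing H at y(t) and y(0) also gives |y(t)| >= |y(0)| exp(-(1 + e) b |y(0)| / a), a loss
   factor tending to 1, which beats beta < c0 / C0 after undoing the linear map DT(x0). *)

section \<open>Forward solutions of autonomous equations\<close>

definition forward_solution :: "('a::real_normed_vector \<Rightarrow> 'a) \<Rightarrow> (real \<Rightarrow> 'a) \<Rightarrow> bool" where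
  "forward_solution f x \<longleftrightarrow> (\<forall>t\<ge>0. (x has_vector_derivative f (x t)) (at t within {0..}))"

lemma forward_solution_continuous:
  "forward_solution f x \<Longrightarrow> continuous_on {0..} x"
  unfolding forward_solution_def by (rule continuous_on_vector_derivative) auto

lemma forward_solution_at:
  assumes "forward_solution f x" "0 < t"
  shows "(x has_vector_derivative f (x t)) (at t)"
proof -
  have "at t within {0..} = at t"
    using assms(2) by (intro at_within_interior) simp
  then show ?thesis
    using assms unfolding forward_solution_def by (metis less_imp_le)
qed

lemma forward_solution_shift:
  assumes "forward_solution f x" "0 \<le> s"
  shows "forward_solution f (\<lambda>t. x (t + s))"
  unfolding forward_solution_def
proof (intro allI impI)
  fix t :: real assume "0 \<le> t"
  have "((\<lambda>t. t + s) has_vector_derivative 1) (at t within {0..})"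
    by (auto intro!: derivative_eq_intros simp: has_real_derivative_iff_has_vector_derivative[symmetric])
  moreover have "(\<lambda>t. t + s) ` {0..} \<subseteq> {0..}"
    using assms(2) by auto
  then have "(x has_vector_derivative f (x (t + s))) (at (t + s) within (\<lambda>t. t + s) ` {0..})"
    using assms \<open>0 \<le> t\<close> unfolding forward_solution_def
    by (auto intro: has_vector_derivative_within_subset)
  ultimately show "((\<lambda>t. x (t + s)) has_vector_derivative f (x (t + s))) (at t within {0..})"
    using vector_diff_chain_within[of "\<lambda>t. t + s" 1 t "{0..}" x] by (simp add: o_def)
qed

lemma gronwall_exp_bound:
  fixes u u' :: "real \<Rightarrow> real"
  assumes cont: "continuous_on {0..} u"
    and deriv: "\<And>t. 0 < t \<Longrightarrow> (u has_real_derivative u' t) (at t)"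
    and bound: "\<And>t. 0 < t \<Longrightarrow> u' t \<le> K * u t"
    and "0 \<le> t"
  shows "u t \<le> u 0 * exp (K * t)"
proof -
  define v where "v s = u s * exp (- K * s)" for s
  have "v t \<le> v 0"
  proof (rule DERIV_nonpos_imp_decreasing_open[OF \<open>0 \<le> t\<close>])
    fix s :: real assume "0 < s"
    have "(v has_real_derivative (u' s - K * u s) * exp (- K * s)) (at s)"
      unfolding v_def by (auto intro!: derivative_eq_intros deriv[OF \<open>0 < s\<close>] simp: algebra_simps)
    moreover have "(u' s - K * u s) * exp (- K * s) \<le> 0"
      using bound[OF \<open>0 < s\<close>] by (simp add: mult_nonpos_nonneg)
    ultimately show "\<exists>y. (v has_real_derivative y) (at s) \<and> y \<le> 0" by blast
  next
    show "continuous_on {0..t} v"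
      unfolding v_def by (intro continuous_intros continuous_on_subset[OF cont]) auto
  qed
  then show ?thesis
    by (simp add: v_def exp_minus field_simps)
qed

lemma DERIV_ge_imp_ge_linear:
  fixes f f' :: "real \<Rightarrow> real"
  assumes cont: "continuous_on {0..} f"
    and deriv: "\<And>t. 0 < t \<Longrightarrow> (f has_real_derivative f' t) (at t)"
    and bound: "\<And>t. 0 < t \<Longrightarrow> w \<le> f' t"
    and "0 \<le> t"
  shows "f 0 + w * t \<le> f t"
proof -
  have "f 0 - w * 0 \<le> f t - w * t"
  proof (rule DERIV_nonneg_imp_increasing_open[OF \<open>0 \<le> t\<close>])
    fix s :: real assume "0 < s" "s < t"
    have "((\<lambda>s. f s - w * s) has_real_derivative f' s - w * 1) (at s)"
      by (intro DERIV_diff deriv[OF \<open>0 < s\<close>] DERIV_cmult DERIV_ident)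
    then show "\<exists>y. ((\<lambda>s. f s - w * s) has_real_derivative y) (at s) \<and> 0 \<le> y"
      using bound[OF \<open>0 < s\<close>] by force
  qed (intro continuous_intros continuous_on_subset[OF cont], auto)
  then show ?thesis
    by simp
qed

lemma first_exit_from_closed:
  fixes x :: "real \<Rightarrow> 'a::topological_space"
  assumes cont: "continuous_on {0..} x" and "closed K" "x 0 \<in> K" "0 \<le> t" "x t \<notin> K"
  obtains ts where "0 \<le> ts" "\<And>s. 0 \<le> s \<Longrightarrow> s \<le> ts \<Longrightarrow> x s \<in> K"
    and "\<And>d. 0 < d \<Longrightarrow> \<exists>s. ts < s \<and> s < ts + d \<and> x s \<notin> K"
proof
  define Z where "Z = {s. 0 \<le> s \<and> x s \<notin> K}"
  have "t \<in> Z" "bdd_below Z"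
    using assms(4,5) unfolding Z_def by (auto intro: bdd_belowI[of _ 0])
  then show "0 \<le> Inf Z"
    unfolding Z_def by (metis (mono_tags) cInf_greatest empty_iff mem_Collect_eq)
  have before: "x s \<in> K" if "0 \<le> s" "s < Inf Z" for s
    using that cInf_lower[OF _ \<open>bdd_below Z\<close>, of s] unfolding Z_def by force
  have "x (Inf Z) \<in> K"
  proof (cases "Inf Z = 0")
    case False
    have "closed ({0..Inf Z} \<inter> x -` K)"
      by (intro continuous_closed_preimage continuous_on_subset[OF cont] \<open>closed K\<close>) auto
    moreover have "{0..<Inf Z} \<subseteq> {0..Inf Z} \<inter> x -` K"
      using before by auto
    ultimately have "closure {0..<Inf Z} \<subseteq> {0..Inf Z} \<inter> x -` K"
      by (metis closure_minimal)
    then show ?thesis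
      using False \<open>0 \<le> Inf Z\<close> by auto
  qed (use \<open>x 0 \<in> K\<close> in simp)
  with before show "x s \<in> K" if "0 \<le> s" "s \<le> Inf Z" for s
    using that by (cases "s = Inf Z") auto
  fix d :: real assume "0 < d"
  then obtain s where "s \<in> Z" "s < Inf Z + d"
    using \<open>t \<in> Z\<close> cInf_less_iff[of Z "Inf Z + d"] \<open>bdd_below Z\<close> by auto
  moreover have "Inf Z \<le> s" "s \<noteq> Inf Z"
    using \<open>s \<in> Z\<close> \<open>bdd_below Z\<close> \<open>x (Inf Z) \<in> K\<close> by (auto simp: Z_def cInf_lower)
  ultimately show "\<exists>s. Inf Z < s \<and> s < Inf Z + d \<and> x s \<notin> K"
    unfolding Z_def by force
qed

lemma continuous_trapped:
  fixes x :: "real \<Rightarrow> 'a::topological_space"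
  assumes cont: "continuous_on {0..} x" and "closed K" "open V" "K \<subseteq> V" "x 0 \<in> K"
    and step: "\<And>t. 0 \<le> t \<Longrightarrow> x ` {0..t} \<subseteq> V \<Longrightarrow> x t \<in> K"
    and "0 \<le> t"
  shows "x t \<in> K"
proof (rule ccontr)
  assume "x t \<notin> K"
  then obtain ts where "0 \<le> ts" and in_K: "\<And>s. 0 \<le> s \<Longrightarrow> s \<le> ts \<Longrightarrow> x s \<in> K"
    and exits: "\<And>d. 0 < d \<Longrightarrow> \<exists>s. ts < s \<and> s < ts + d \<and> x s \<notin> K"
    using first_exit_from_closed[OF cont \<open>closed K\<close> \<open>x 0 \<in> K\<close> \<open>0 \<le> t\<close>] by blast
  have "x ts \<in> V" "continuous (at ts within {0..}) x"
    using in_K[OF \<open>0 \<le> ts\<close>] \<open>K \<subseteq> V\<close> cont \<open>0 \<le> ts\<close> by (auto simp: continuous_on_eq_continuous_within)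
  then obtain A where "open A" "ts \<in> A" "\<And>s. 0 \<le> s \<Longrightarrow> s \<in> A \<Longrightarrow> x s \<in> V"
    using \<open>open V\<close> unfolding continuous_within_topological by force
  then obtain d where "0 < d" and d: "\<And>s. 0 \<le> s \<Longrightarrow> dist s ts < d \<Longrightarrow> x s \<in> V"
    by (metis open_dist)
  obtain s where "ts < s" "s < ts + d" "x s \<notin> K"
    using exits[OF \<open>0 < d\<close>] by blast
  have "x r \<in> V" if "0 \<le> r" "r \<le> s" for r
    using in_K[of r] d[of r] \<open>K \<subseteq> V\<close> that \<open>s < ts + d\<close>
    by (cases "r \<le> ts") (auto simp: dist_real_def)
  then have "x s \<in> K"
    using step[of s] \<open>0 \<le> ts\<close> \<open>ts < s\<close> by (auto simp: image_subset_iff)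
  with \<open>x s \<notin> K\<close> show False ..
qed

lemma forward_solution_unique:
  fixes f :: "'a::real_inner \<Rightarrow> 'a"
  assumes lip: "K-lipschitz_on S f"
    and x: "forward_solution f x" and y: "forward_solution f y"
    and xS: "\<And>t. 0 \<le> t \<Longrightarrow> x t \<in> S" and yS: "\<And>t. 0 \<le> t \<Longrightarrow> y t \<in> S"
    and "x 0 = y 0" and "0 \<le> t"
  shows "x t = y t"
proof -
  define u where "u t = inner (x t - y t) (x t - y t)" for t
  define u' where "u' t = 2 * inner (x t - y t) (f (x t) - f (y t))" for t
  have "u t \<le> u 0 * exp (2 * K * t)"
  proof (rule gronwall_exp_bound[OF _ _ _ \<open>0 \<le> t\<close>])
    show "continuous_on {0..} u"
      unfolding u_def using forward_solution_continuous[OF x] forward_solution_continuous[OF y]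
      by (intro continuous_intros)
  next
    fix s :: real assume "0 < s"
    have "((\<lambda>s. x s - y s) has_vector_derivative f (x s) - f (y s)) (at s)"
      using forward_solution_at[OF x \<open>0 < s\<close>] forward_solution_at[OF y \<open>0 < s\<close>]
      by (rule has_vector_derivative_diff)
    then have "((\<lambda>s. x s - y s) has_derivative (\<lambda>h. h *\<^sub>R (f (x s) - f (y s)))) (at s)"
      by (simp add: has_vector_derivative_def)
    from has_derivative_inner[OF this this]
    show "(u has_real_derivative u' s) (at s)"
      unfolding u_def u'_def has_field_derivative_def
      by (rule has_derivative_eq_rhs) (simp add: fun_eq_iff inner_commute)
    have "inner (x s - y s) (f (x s) - f (y s)) \<le> norm (x s - y s) * norm (f (x s) - f (y s))"
      by (rule norm_cauchy_schwarz)
    also have "\<dots> \<le> norm (x s - y s) * (K * norm (x s - y s))"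
      using lipschitz_on_normD[OF lip xS yS] \<open>0 < s\<close> by (simp add: mult_left_mono)
    finally show "u' s \<le> 2 * K * u s"
      unfolding u_def u'_def by (simp add: power2_norm_eq_inner[symmetric] power2_eq_square mult.left_commute)
  qed
  then have "u t \<le> 0"
    using \<open>x 0 = y 0\<close> by (simp add: u_def)
  then show ?thesis
    unfolding u_def by (metis inner_gt_zero_iff not_le right_minus_eq)
qed

lemma forward_solution_periodic:
  fixes f :: "'a::real_inner \<Rightarrow> 'a"
  assumes "K-lipschitz_on S f" "forward_solution f x" "\<And>t. 0 \<le> t \<Longrightarrow> x t \<in> S"
    and "0 \<le> T" "x T = x 0" "0 \<le> t"
  shows "x (t + T) = x t"
  using forward_solution_unique[OF assms(1) forward_solution_shift[OF assms(2,4)] assms(2)] assms(3-6)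
  by simp

section \<open>Lifting the polar angle of a planar curve\<close>

lemma has_vector_derivative_fst:
  "(x has_vector_derivative v) F \<Longrightarrow> ((\<lambda>t. fst (x t)) has_real_derivative fst v) F"
  using has_derivative_fst[of x "\<lambda>h. h *\<^sub>R v" F]
  by (simp add: has_real_derivative_iff_has_vector_derivative has_vector_derivative_def)

lemma has_vector_derivative_snd:
  "(x has_vector_derivative v) F \<Longrightarrow> ((\<lambda>t. snd (x t)) has_real_derivative snd v) F"
  using has_derivative_snd[of x "\<lambda>h. h *\<^sub>R v" F]
  by (simp add: has_real_derivative_iff_has_vector_derivative has_vector_derivative_def)

lemma power2_norm_prod: "(norm y)^2 = (fst y)^2 + (snd y)^2" for y :: "real \<times> real"
  by (cases y) (simp add: norm_Pair)

lemma has_real_derivative_angle_offset: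
  fixes x :: "real \<Rightarrow> real \<times> real"
  assumes dx: "(x has_vector_derivative v) (at t)"
    and d\<theta>: "(\<theta> has_real_derivative (fst (x t) * snd v - snd (x t) * fst v) / (norm (x t))^2) (at t)"
    and "x t \<noteq> 0"
  shows "((\<lambda>s. fst (x s) * sin (\<theta> s) - snd (x s) * cos (\<theta> s)) has_real_derivative
      inner (x t) v / (norm (x t))^2 * (fst (x t) * sin (\<theta> t) - snd (x t) * cos (\<theta> t))) (at t)"
proof -
  define X where "X = (norm (x t))^2"
  have X: "X = (fst (x t))^2 + (snd (x t))^2"
    unfolding X_def by (rule power2_norm_prod)
  have "X > 0"
    using \<open>x t \<noteq> 0\<close> unfolding X_def by simp
  have D: "((\<lambda>s. fst (x s) * sin (\<theta> s) - snd (x s) * cos (\<theta> s)) has_real_derivative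
      fst v * sin (\<theta> t) - snd v * cos (\<theta> t)
      + (fst (x t) * snd v - snd (x t) * fst v) / X * (fst (x t) * cos (\<theta> t) + snd (x t) * sin (\<theta> t)))
      (at t)"
    using has_vector_derivative_fst[OF dx] has_vector_derivative_snd[OF dx] d\<theta> \<open>X > 0\<close>
    unfolding X_def[symmetric] by (auto intro!: derivative_eq_intros simp: field_simps)
  have "X * (fst v * sin (\<theta> t) - snd v * cos (\<theta> t))
      + (fst (x t) * snd v - snd (x t) * fst v) * (fst (x t) * cos (\<theta> t) + snd (x t) * sin (\<theta> t))
      = inner (x t) v * (fst (x t) * sin (\<theta> t) - snd (x t) * cos (\<theta> t))"
    unfolding X inner_prod_def by (simp add: power2_eq_square algebra_simps)
  then have "fst v * sin (\<theta> t) - snd v * cos (\<theta> t)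
      + (fst (x t) * snd v - snd (x t) * fst v) / X * (fst (x t) * cos (\<theta> t) + snd (x t) * sin (\<theta> t))
      = inner (x t) v / X * (fst (x t) * sin (\<theta> t) - snd (x t) * cos (\<theta> t))"
    using \<open>X > 0\<close> by (simp add: field_simps)
  with D show ?thesis
    unfolding X_def by simp
qed

lemma angle_offset_vanishes:
  fixes x x' :: "real \<Rightarrow> real \<times> real" and \<theta> :: "real \<Rightarrow> real"
  assumes cx: "continuous_on {0..} x" and c\<theta>: "continuous_on {0..} \<theta>"
    and dx: "\<And>t. 0 < t \<Longrightarrow> (x has_vector_derivative x' t) (at t)"
    and d\<theta>: "\<And>t. 0 < t \<Longrightarrow>
      (\<theta> has_real_derivative (fst (x t) * snd (x' t) - snd (x t) * fst (x' t)) / (norm (x t))^2) (at t)"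
    and nz: "\<And>t. 0 \<le> t \<Longrightarrow> x t \<noteq> 0"
    and radial: "\<And>t. 0 < t \<Longrightarrow> inner (x t) (x' t) \<le> K * (norm (x t))^2"
    and init: "fst (x 0) * sin (\<theta> 0) - snd (x 0) * cos (\<theta> 0) = 0"
    and "0 \<le> t"
  shows "fst (x t) * sin (\<theta> t) - snd (x t) * cos (\<theta> t) = 0"
proof -
  define p where "p = (\<lambda>t. fst (x t) * sin (\<theta> t) - snd (x t) * cos (\<theta> t))"
  have "(p t)^2 \<le> (p 0)^2 * exp (2 * K * t)"
  proof (rule gronwall_exp_bound[OF _ _ _ \<open>0 \<le> t\<close>])
    show "continuous_on {0..} (\<lambda>t. (p t)^2)"
      unfolding p_def by (intro continuous_intros cx c\<theta>)
    fix r :: real assume "0 < r"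
    define k where "k = inner (x r) (x' r) / (norm (x r))^2"
    have "(p has_real_derivative k * p r) (at r)"
      using has_real_derivative_angle_offset[OF dx d\<theta> nz, OF \<open>0 < r\<close> \<open>0 < r\<close>] \<open>0 < r\<close>
      unfolding p_def k_def by simp
    then show "((\<lambda>t. (p t)^2) has_real_derivative 2 * k * (p r)^2) (at r)"
      by (auto intro!: derivative_eq_intros simp: power2_eq_square)
    have "k \<le> K"
      using radial[OF \<open>0 < r\<close>] nz[of r] \<open>0 < r\<close> unfolding k_def by (simp add: divide_le_eq)
    then show "2 * k * (p r)^2 \<le> 2 * K * (p r)^2"
      by (intro mult_right_mono mult_left_mono) simp_all
  qed
  then show ?thesis
    using init unfolding p_def by simp
qed

text \<open>Once the offset of \<open>x\<close> from the ray of direction \<open>\<theta>\<close> vanishes, \<open>x\<close> lies on that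
  ray or on the opposite one; continuity and \<open>x \<noteq> 0\<close> exclude switching between the two.\<close>

lemma angle_lift:
  fixes x x' :: "real \<Rightarrow> real \<times> real" and \<theta> :: "real \<Rightarrow> real"
  assumes cx: "continuous_on {0..} x" and c\<theta>: "continuous_on {0..} \<theta>"
    and dx: "\<And>t. 0 < t \<Longrightarrow> (x has_vector_derivative x' t) (at t)"
    and d\<theta>: "\<And>t. 0 < t \<Longrightarrow>
      (\<theta> has_real_derivative (fst (x t) * snd (x' t) - snd (x t) * fst (x' t)) / (norm (x t))^2) (at t)"
    and nz: "\<And>t. 0 \<le> t \<Longrightarrow> x t \<noteq> 0"
    and radial: "\<And>t. 0 < t \<Longrightarrow> inner (x t) (x' t) \<le> K * (norm (x t))^2"
    and init: "x 0 = (norm (x 0) * cos (\<theta> 0), norm (x 0) * sin (\<theta> 0))"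
    and "0 \<le> t"
  shows "x t = (norm (x t) * cos (\<theta> t), norm (x t) * sin (\<theta> t))"
proof -
  define q where "q t = fst (x t) * cos (\<theta> t) + snd (x t) * sin (\<theta> t)" for t
  have x0: "fst (x 0) = norm (x 0) * cos (\<theta> 0)" "snd (x 0) = norm (x 0) * sin (\<theta> 0)"
    using arg_cong[OF init, of fst] arg_cong[OF init, of snd] by simp_all
  have offset0: "fst (x 0) * sin (\<theta> 0) - snd (x 0) * cos (\<theta> 0) = 0"
    unfolding x0 by algebra
  have p: "fst (x s) * sin (\<theta> s) - snd (x s) * cos (\<theta> s) = 0" if "0 \<le> s" for s
    using cx c\<theta> dx d\<theta> nz radial offset0 that by (rule angle_offset_vanishes)
  have norm_q: "(q s)^2 = (norm (x s))^2" if "0 \<le> s" for s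
  proof -
    have "(fst (x s) * sin (\<theta> s) - snd (x s) * cos (\<theta> s))^2 + (q s)^2
        = ((fst (x s))^2 + (snd (x s))^2) * ((sin (\<theta> s))^2 + (cos (\<theta> s))^2)"
      unfolding q_def power2_eq_square by algebra
    then show ?thesis by (simp add: power2_norm_prod p[OF that])
  qed
  have "q 0 = norm (x 0) * ((cos (\<theta> 0))^2 + (sin (\<theta> 0))^2)"
    unfolding q_def x0 power2_eq_square by algebra
  then have "q 0 > 0"
    using nz[of 0] by simp
  have "q t > 0"
  proof (rule ccontr)
    assume "\<not> q t > 0"
    moreover have "continuous_on {0..t} q"
      unfolding q_def by (intro continuous_intros continuous_on_subset[OF cx] continuous_on_subset[OF c\<theta>]) auto
    ultimately obtain r where "0 \<le> r" "r \<le> t" "q r = 0"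
      using IVT2'[of q t 0 0] \<open>q 0 > 0\<close> \<open>0 \<le> t\<close> by auto
    then show False
      using norm_q[of r] nz[of r] by simp
  qed
  then have "q t = norm (x t)"
    using norm_q[OF \<open>0 \<le> t\<close>] by simp
  moreover have "q t * cos (\<theta> t) + (fst (x t) * sin (\<theta> t) - snd (x t) * cos (\<theta> t)) * sin (\<theta> t)
      = fst (x t) * ((sin (\<theta> t))^2 + (cos (\<theta> t))^2)"
    "q t * sin (\<theta> t) - (fst (x t) * sin (\<theta> t) - snd (x t) * cos (\<theta> t)) * cos (\<theta> t)
      = snd (x t) * ((sin (\<theta> t))^2 + (cos (\<theta> t))^2)"
    unfolding q_def power2_eq_square by algebra+
  ultimately show ?thesis
    using p[OF \<open>0 \<le> t\<close>] by (simp add: prod_eq_iff)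
qed

lemma exists_polar_angle:
  fixes y :: "real \<times> real"
  assumes "y \<noteq> 0"
  obtains \<phi> where "y = (norm y * cos \<phi>, norm y * sin \<phi>)"
proof -
  have "(fst y / norm y)^2 + (snd y / norm y)^2 = 1"
    using assms by (simp add: field_simps flip: power2_norm_prod)
  then obtain \<phi> where "fst y / norm y = cos \<phi>" "snd y / norm y = sin \<phi>"
    using sincos_total_2pi by metis
  then have "norm y * cos \<phi> = fst y" "norm y * sin \<phi> = snd y"
    using assms by (auto simp flip: \<open>fst y / norm y = cos \<phi>\<close> \<open>snd y / norm y = sin \<phi>\<close>)
  then show ?thesis
    by (intro that[of \<phi>]) (simp add: prod_eq_iff)
qed

lemma integral_has_real_derivative_atLeast:
  assumes "continuous_on {a..} g" "a \<le> t"
  shows "((\<lambda>s. integral {a..s} g) has_real_derivative g t) (at t within {a..})"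
proof -
  have "((\<lambda>s. integral {a..s} g) has_real_derivative g t) (at t within {a..t + 1})"
    using assms by (intro integral_has_real_derivative continuous_on_subset[OF assms(1)]) auto
  moreover have "at t within {a..} = at t within {a..t + 1}"
    by (rule at_within_nhd[of _ "{..<t + 1}"]) auto
  ultimately show ?thesis by simp
qed

lemma exists_angle_lift:
  fixes x x' :: "real \<Rightarrow> real \<times> real"
  assumes cx: "continuous_on {0..} x" and cx': "continuous_on {0..} x'"
    and dx: "\<And>t. 0 < t \<Longrightarrow> (x has_vector_derivative x' t) (at t)"
    and nz: "\<And>t. 0 \<le> t \<Longrightarrow> x t \<noteq> 0"
    and radial: "\<And>t. 0 < t \<Longrightarrow> inner (x t) (x' t) \<le> K * (norm (x t))^2"
  obtains \<theta> where "\<And>t. 0 \<le> t \<Longrightarrow>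
      (\<theta> has_real_derivative (fst (x t) * snd (x' t) - snd (x t) * fst (x' t)) / (norm (x t))^2)
        (at t within {0..})"
    and "\<And>t. 0 \<le> t \<Longrightarrow> x t = (norm (x t) * cos (\<theta> t), norm (x t) * sin (\<theta> t))"
proof -
  define \<omega> where "\<omega> t = (fst (x t) * snd (x' t) - snd (x t) * fst (x' t)) / (norm (x t))^2" for t
  have c\<omega>: "continuous_on {0..} \<omega>"
    unfolding \<omega>_def using nz by (intro continuous_intros cx cx') auto
  obtain \<theta>0 where x0: "x 0 = (norm (x 0) * cos \<theta>0, norm (x 0) * sin \<theta>0)"
    using exists_polar_angle[OF nz[OF order.refl]] by blast
  define \<theta> where "\<theta> t = \<theta>0 + integral {0..t} \<omega>" for t
  have d\<theta>: "(\<theta> has_real_derivative \<omega> t) (at t within {0..})" if "0 \<le> t" for t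
    unfolding \<theta>_def using integral_has_real_derivative_atLeast[OF c\<omega> that]
    by (auto intro!: derivative_eq_intros)
  have c\<theta>: "continuous_on {0..} \<theta>"
    using d\<theta> by (intro continuous_on_vector_derivative)
      (auto simp: has_real_derivative_iff_has_vector_derivative)
  have "\<theta> 0 = \<theta>0"
    by (simp add: \<theta>_def)
  show thesis
  proof (rule that)
    show "(\<theta> has_real_derivative (fst (x t) * snd (x' t) - snd (x t) * fst (x' t)) / (norm (x t))^2)
        (at t within {0..})" if "0 \<le> t" for t
      using d\<theta>[OF that] unfolding \<omega>_def .
    show "x t = (norm (x t) * cos (\<theta> t), norm (x t) * sin (\<theta> t))" if "0 \<le> t" for t
    proof (rule angle_lift[OF cx c\<theta> dx _ nz radial _ that])
      show "(\<theta> has_real_derivative (fst (x s) * snd (x' s) - snd (x s) * fst (x' s)) / (norm (x s))^2)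
          (at s)" if "0 < s" for s
        using d\<theta>[of s] that by (simp add: \<omega>_def at_within_interior[of s "{0..}"])
      show "x 0 = (norm (x 0) * cos (\<theta> 0), norm (x 0) * sin (\<theta> 0))"
        unfolding \<open>\<theta> 0 = \<theta>0\<close> by (rule x0)
    qed
  qed
qed

section \<open>The Hamiltonian of a vortex pair in a uniform drift\<close>

lemma has_real_derivative_ln_norm:
  fixes x :: "real \<Rightarrow> 'a::real_inner"
  assumes "(x has_vector_derivative v) (at t within S)" and "x t \<noteq> 0"
  shows "((\<lambda>s. ln (norm (x s))) has_real_derivative inner (x t) v / (norm (x t))^2) (at t within S)"
proof -
  have eq: "(\<lambda>s. ln (norm (x s))) = (\<lambda>s. ln (inner (x s) (x s)) / 2)"
  proof
    fix s
    show "ln (norm (x s)) = ln (inner (x s) (x s)) / 2"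
      by (cases "x s = 0") (simp_all add: norm_eq_sqrt_inner ln_sqrt)
  qed
  have "((\<lambda>s. ln (inner (x s) (x s)) / 2) has_real_derivative inner (x t) v / (norm (x t))^2)
      (at t within S)"
    using assms unfolding has_vector_derivative_def has_field_derivative_def
    by (auto intro!: derivative_eq_intros simp: power2_norm_eq_inner inner_commute field_simps)
  then show ?thesis unfolding eq .
qed

lemma norm_inversion_diff:
  fixes x y :: "'a::real_inner"
  assumes "x \<noteq> 0" "y \<noteq> 0"
  shows "norm (x /\<^sub>R (norm x)^2 - y /\<^sub>R (norm y)^2) = norm (x - y) / (norm x * norm y)"
proof -
  have "(norm (x /\<^sub>R (norm x)^2 - y /\<^sub>R (norm y)^2))^2 = (norm (x - y))^2 / ((norm x)^2 * (norm y)^2)"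
    unfolding power2_norm_eq_inner
    using assms by (simp add: inner_diff_left inner_diff_right inner_commute field_simps)
  also have "\<dots> = (norm (x - y) / (norm x * norm y))^2"
    by (simp add: power_divide power_mult_distrib)
  finally show ?thesis
    by (rule power2_eq_imp_eq) simp_all
qed

definition energy_field :: "real \<Rightarrow> real \<Rightarrow> real \<times> real \<Rightarrow> real \<times> real" where
  "energy_field a b y = (- (a * snd y / (norm y)^2), a * fst y / (norm y)^2 - b)"

definition energy :: "real \<Rightarrow> real \<Rightarrow> real \<times> real \<Rightarrow> real" where
  "energy a b y = a * ln (norm y) - b * fst y"

lemma energy_field_lipschitz:
  assumes "0 \<le> a" "0 < L"
  shows "(a / L^2)-lipschitz_on {y. L \<le> norm y} (energy_field a b)"
proof (rule lipschitz_onI)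
  fix y z :: "real \<times> real" assume "y \<in> {y. L \<le> norm y}" "z \<in> {y. L \<le> norm y}"
  then have y: "L \<le> norm y" "y \<noteq> 0" and z: "L \<le> norm z" "z \<noteq> 0"
    using \<open>0 < L\<close> by auto
  define u where "u = y /\<^sub>R (norm y)^2 - z /\<^sub>R (norm z)^2"
  have "energy_field a b y - energy_field a b z = (- (a * snd u), a * fst u)"
    unfolding energy_field_def u_def by (simp add: algebra_simps divide_inverse)
  then have "(norm (energy_field a b y - energy_field a b z))^2 = (a * norm u)^2"
    by (simp add: power2_norm_prod[of u] power2_norm_prod[of "(_, _)"] algebra_simps)
  then have "norm (energy_field a b y - energy_field a b z) = a * (norm (y - z) / (norm y * norm z))"
    using \<open>0 \<le> a\<close> norm_inversion_diff[OF y(2) z(2)] unfolding u_def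
    by (metis norm_ge_zero power2_eq_imp_eq zero_le_mult_iff)
  also have "\<dots> \<le> a * (norm (y - z) / L^2)"
    using y z \<open>0 < L\<close> \<open>0 \<le> a\<close>
    by (intro mult_left_mono divide_left_mono) (auto simp: power2_eq_square intro: mult_mono)
  finally show "dist (energy_field a b y) (energy_field a b z) \<le> a / L^2 * dist y z"
    by (simp add: dist_norm)
qed (use assms in simp)

lemma inner_energy_field: "y \<noteq> 0 \<Longrightarrow> inner y (energy_field a b y) = - b * snd y"
  unfolding energy_field_def inner_prod_def by (simp add: field_simps)

lemma inner_energy_field_le:
  assumes "0 < b" "0 < L" "L \<le> norm y"
  shows "inner y (energy_field a b y) \<le> b / L * (norm y)^2"
proof -
  have "y \<noteq> 0"
    using assms by auto
  have "inner y (energy_field a b y) \<le> b * norm y"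
    using inner_energy_field[OF \<open>y \<noteq> 0\<close>] norm_snd_le[of "snd y" "fst y"] \<open>0 < b\<close>
      mult_left_mono[of "- snd y" "norm y" b] by simp
  moreover have "b * norm y * L \<le> b * norm y * norm y"
    using assms by (intro mult_left_mono) auto
  then have "b * norm y \<le> b / L * (norm y)^2"
    using \<open>0 < L\<close> by (simp add: field_simps power2_eq_square)
  ultimately show ?thesis
    by linarith
qed

lemma cross_energy_field:
  assumes "y \<noteq> 0"
  shows "fst y * snd (energy_field a b y) - snd y * fst (energy_field a b y) = a - b * fst y"
proof -
  define X where "X = (norm y)^2"
  have "X \<noteq> 0"
    using assms by (simp add: X_def)
  have "fst y * (a * fst y / X - b) - snd y * (- (a * snd y / X))
      = a * ((fst y)^2 + (snd y)^2) / X - b * fst y"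
    using \<open>X \<noteq> 0\<close> by (simp add: field_simps power2_eq_square)
  also have "\<dots> = a - b * fst y"
    using \<open>X \<noteq> 0\<close> unfolding X_def power2_norm_prod by simp
  finally show ?thesis
    by (simp add: energy_field_def X_def)
qed

lemma energy_has_derivative_zero:
  assumes "(x has_vector_derivative energy_field a b (x t)) (at t within S)" and "x t \<noteq> 0"
  shows "((\<lambda>t. energy a b (x t)) has_real_derivative 0) (at t within S)"
proof -
  have "((\<lambda>t. energy a b (x t)) has_real_derivative
      a * (inner (x t) (energy_field a b (x t)) / (norm (x t))^2) - b * fst (energy_field a b (x t)))
      (at t within S)"
    unfolding energy_def
    by (intro DERIV_diff DERIV_cmult has_real_derivative_ln_norm has_vector_derivative_fst assms)
  then show ?thesis
    using assms(2) by (simp add: inner_energy_field) (simp add: energy_field_def)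
qed

lemma energy_conserved:
  assumes x: "forward_solution (energy_field a b) x"
    and nz: "\<And>s. 0 \<le> s \<Longrightarrow> s \<le> t \<Longrightarrow> x s \<noteq> 0" and "0 \<le> t"
  shows "energy a b (x t) = energy a b (x 0)"
proof -
  have "\<exists>c. \<forall>s\<in>{0..t}. energy a b (x s) = c"
  proof (rule has_field_derivative_zero_constant)
    fix s assume "s \<in> {0..t}"
    then have "(x has_vector_derivative energy_field a b (x s)) (at s within {0..t})"
      using x unfolding forward_solution_def
      by (auto intro: has_vector_derivative_within_subset)
    then show "((\<lambda>s. energy a b (x s)) has_real_derivative 0) (at s within {0..t})"
      using nz \<open>s \<in> {0..t}\<close> by (intro energy_has_derivative_zero) auto
  qed simp
  then show ?thesis
    using \<open>0 \<le> t\<close> by force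
qed

lemma energy_bounds:
  assumes "0 \<le> b"
  shows "a * ln (norm y) - b * norm y \<le> energy a b y" "energy a b y \<le> a * ln (norm y) + b * norm y"
proof -
  have "\<bar>b * fst y\<bar> \<le> b * norm y"
    using assms norm_fst_le[of "fst y" "snd y"] by (simp add: abs_mult mult_left_mono)
  then show "a * ln (norm y) - b * norm y \<le> energy a b y" "energy a b y \<le> a * ln (norm y) + b * norm y"
    unfolding energy_def by linarith+
qed

lemma energy_ray_strict_mono:
  assumes "0 < a" "0 < b"
  shows "strict_mono_on {0<..<a / b} (\<lambda>r. energy a b (r * cos \<phi>, r * sin \<phi>))"
proof (rule strict_mono_onI)
  fix r s :: real assume "r \<in> {0<..<a / b}" "s \<in> {0<..<a / b}" "r < s"
  have "a * ln r - b * cos \<phi> * r < a * ln s - b * cos \<phi> * s"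
  proof (rule DERIV_pos_imp_increasing[OF \<open>r < s\<close>])
    fix \<rho> assume "r \<le> \<rho>" "\<rho> \<le> s"
    then have "0 < \<rho>" "\<rho> < a / b"
      using \<open>r \<in> {0<..<a / b}\<close> \<open>s \<in> {0<..<a / b}\<close> by auto
    then have "b < a / \<rho>"
      using \<open>0 < b\<close> by (simp add: field_simps)
    moreover have "b * cos \<phi> \<le> b"
      using \<open>0 < b\<close> cos_le_one[of \<phi>] by simp
    ultimately have "b * cos \<phi> < a / \<rho>"
      by linarith
    moreover have "((\<lambda>r. a * ln r - b * cos \<phi> * r) has_real_derivative a / \<rho> - b * cos \<phi>) (at \<rho>)"
      using \<open>0 < \<rho>\<close> by (auto intro!: derivative_eq_intros simp: field_simps)
    ultimately show "\<exists>y. ((\<lambda>r. a * ln r - b * cos \<phi> * r) has_real_derivative y) (at \<rho>) \<and> 0 < y"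
      by force
  qed
  moreover have "norm (\<rho> * cos \<phi>, \<rho> * sin \<phi>) = \<rho>" if "0 < \<rho>" for \<rho>
    using that by (simp add: norm_Pair power_mult_distrib flip: distrib_left)
  ultimately show "energy a b (r * cos \<phi>, r * sin \<phi>) < energy a b (s * cos \<phi>, s * sin \<phi>)"
    using \<open>r \<in> {0<..<a / b}\<close> \<open>s \<in> {0<..<a / b}\<close> by (simp add: energy_def algebra_simps)
qed

lemma energy_sublevel_annulus:
  assumes "0 < a" "0 < b" "y \<noteq> 0" "norm y \<le> a / (2 * b)"
    and low_energy: "energy a b y < a * ln (a / (2 * b)) - a / 2"
  shows "exp ((energy a b y - a / 2) / a) \<le> norm y" and "norm y < a / (2 * b)"
proof -
  define R where "R = a / (2 * b)"
  have "b * R = a / 2"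
    using \<open>0 < b\<close> by (simp add: R_def)
  have "b * norm y \<le> a / 2"
    using mult_left_mono[OF assms(4)[folded R_def], of b] \<open>0 < b\<close> \<open>b * R = a / 2\<close> by simp
  then have "(energy a b y - a / 2) / a \<le> ln (norm y)"
    using energy_bounds(2)[of b a y] \<open>0 < a\<close> \<open>0 < b\<close> by (simp add: pos_divide_le_eq mult.commute)
  then have "exp ((energy a b y - a / 2) / a) \<le> exp (ln (norm y))"
    by simp
  then show "exp ((energy a b y - a / 2) / a) \<le> norm y"
    using assms(3) by simp
  show "norm y < a / (2 * b)"
  proof (rule ccontr)
    assume "\<not> norm y < a / (2 * b)"
    then have "norm y = R"
      using assms(4) by (simp add: R_def)
    then have "a * ln R - a / 2 \<le> energy a b y"
      using energy_bounds(1)[of b a y] \<open>0 < b\<close> \<open>b * R = a / 2\<close> by simp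
    then show False
      using low_energy by (simp add: R_def)
  qed
qed

lemma closed_energy_level_annulus:
  assumes "0 < L"
  shows "closed ({y. L \<le> norm y \<and> norm y \<le> R} \<inter> energy a b -` {E})"
proof (rule continuous_closed_preimage)
  show "continuous_on {y. L \<le> norm y \<and> norm y \<le> R} (energy a b)"
    unfolding energy_def using assms by (intro continuous_intros) auto
  show "closed {y :: real \<times> real. L \<le> norm y \<and> norm y \<le> R}"
    by (intro closed_Collect_conj closed_Collect_le continuous_intros)
qed simp

lemma energy_orbit_trapped:
  assumes "0 < a" "0 < b" and x: "forward_solution (energy_field a b) x"
    and "x 0 \<noteq> 0" "norm (x 0) < a / (2 * b)"
    and low_energy: "energy a b (x 0) < a * ln (a / (2 * b)) - a / 2"
    and "0 \<le> t"
  shows "energy a b (x t) = energy a b (x 0)"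
    and "exp ((energy a b (x 0) - a / 2) / a) \<le> norm (x t)"
    and "norm (x t) < a / (2 * b)"
proof -
  define E R L where "E = energy a b (x 0)" and "R = a / (2 * b)" and "L = exp ((E - a / 2) / a)"
  have "0 < L"
    by (simp add: L_def)
  have annulus: "L \<le> norm y" "norm y < R" if "y \<noteq> 0" "norm y \<le> R" "energy a b y = E" for y
  proof -
    have "energy a b y < a * ln (a / (2 * b)) - a / 2"
      using that(3) low_energy unfolding E_def by simp
    from energy_sublevel_annulus[OF \<open>0 < a\<close> \<open>0 < b\<close> that(1) that(2)[unfolded R_def] this]
    show "L \<le> norm y" "norm y < R"
      using that(3) unfolding L_def R_def E_def by simp_all
  qed
  define K where "K = {y. L \<le> norm y \<and> norm y \<le> R} \<inter> energy a b -` {E}"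
  define V where "V = ball 0 R - {0 :: real \<times> real}"
  have "K \<subseteq> V"
  proof
    fix y assume "y \<in> K"
    then have "y \<noteq> 0" "norm y \<le> R" "energy a b y = E"
      using \<open>0 < L\<close> by (auto simp: K_def)
    then show "y \<in> V"
      using annulus(2) by (simp add: V_def)
  qed
  have "x t \<in> K"
  proof (rule continuous_trapped[OF forward_solution_continuous[OF x] _ _ \<open>K \<subseteq> V\<close> _ _ \<open>0 \<le> t\<close>])
    show "closed K"
      unfolding K_def using \<open>0 < L\<close> by (rule closed_energy_level_annulus)
    show "open V"
      unfolding V_def by (simp add: open_Diff)
    have "norm (x 0) \<le> R"
      using \<open>norm (x 0) < a / (2 * b)\<close> by (simp add: R_def)
    then show "x 0 \<in> K"
      using annulus(1)[of "x 0"] \<open>x 0 \<noteq> 0\<close> unfolding K_def E_def by simp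
    fix s assume "0 \<le> s" "x ` {0..s} \<subseteq> V"
    then have inV: "x r \<noteq> 0 \<and> norm (x r) < R" if "0 \<le> r" "r \<le> s" for r
      using that unfolding V_def by (auto simp: image_subset_iff)
    then have "energy a b (x s) = E"
      unfolding E_def using \<open>0 \<le> s\<close> by (intro energy_conserved[OF x]) auto
    then show "x s \<in> K"
      using annulus(1)[of "x s"] inV[OF \<open>0 \<le> s\<close>] unfolding K_def by simp
  qed
  then have "x t \<in> V" "energy a b (x t) = E" "L \<le> norm (x t)"
    using \<open>K \<subseteq> V\<close> unfolding K_def by auto
  then show "energy a b (x t) = energy a b (x 0)"
    "exp ((energy a b (x 0) - a / 2) / a) \<le> norm (x t)" "norm (x t) < a / (2 * b)"
    unfolding V_def E_def L_def R_def by simp_all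
qed

lemma angular_speed_lower_bound:
  assumes "0 < a" "0 < b" "y \<noteq> 0" "norm y < a / (2 * b)"
  shows "2 * b^2 / a \<le> (a - b * fst y) / (norm y)^2"
proof -
  have "b * fst y \<le> b * (a / (2 * b))"
    using norm_fst_le[of "fst y" "snd y"] assms(2,4) by (intro mult_left_mono) auto
  then have "a / 2 \<le> a - b * fst y"
    using \<open>0 < b\<close> by simp
  moreover have "(norm y)^2 \<le> (a / (2 * b))^2"
    using assms(4) by (intro power_mono) auto
  ultimately have "(a / 2) / (a / (2 * b))^2 \<le> (a - b * fst y) / (norm y)^2"
    using assms by (intro frac_le) auto
  then show ?thesis
    using assms(1,2) by (simp add: power2_eq_square field_simps)
qed

lemma energy_orbit_polar:
  assumes "0 < a" "0 < b" and x: "forward_solution (energy_field a b) x"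
    and "x 0 \<noteq> 0" "norm (x 0) < a / (2 * b)"
    and "energy a b (x 0) < a * ln (a / (2 * b)) - a / 2"
  obtains \<theta> where "continuous_on {0..} \<theta>"
    and "\<And>t. 0 \<le> t \<Longrightarrow> x t = (norm (x t) * cos (\<theta> t), norm (x t) * sin (\<theta> t))"
    and "\<And>t. 0 \<le> t \<Longrightarrow> \<theta> 0 + 2 * b^2 / a * t \<le> \<theta> t"
proof -
  define L where "L = exp ((energy a b (x 0) - a / 2) / a)"
  note trapped = energy_orbit_trapped[OF assms, folded L_def]
  have "0 < L"
    by (simp add: L_def)
  have nz: "x t \<noteq> 0" if "0 \<le> t" for t
    using trapped(2)[OF that] \<open>0 < L\<close> by auto
  have cx: "continuous_on {0..} x"
    by (rule forward_solution_continuous[OF x])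
  have cF: "continuous_on {0..} (\<lambda>t. energy_field a b (x t))"
    unfolding energy_field_def using nz by (intro continuous_intros cx) auto
  have radial: "inner (x t) (energy_field a b (x t)) \<le> b / L * (norm (x t))^2" if "0 < t" for t
    using inner_energy_field_le[OF \<open>0 < b\<close> \<open>0 < L\<close> trapped(2)[of t]] that by simp
  obtain \<theta> where d\<theta>: "\<And>t. 0 \<le> t \<Longrightarrow> (\<theta> has_real_derivative
      (fst (x t) * snd (energy_field a b (x t)) - snd (x t) * fst (energy_field a b (x t))) / (norm (x t))^2)
      (at t within {0..})"
    and polar: "\<And>t. 0 \<le> t \<Longrightarrow> x t = (norm (x t) * cos (\<theta> t), norm (x t) * sin (\<theta> t))"
    using exists_angle_lift[OF cx cF forward_solution_at[OF x] nz radial] by blast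
  have c\<theta>: "continuous_on {0..} \<theta>"
    using d\<theta> by (intro continuous_on_vector_derivative)
      (auto simp: has_real_derivative_iff_has_vector_derivative)
  have d\<theta>_at: "(\<theta> has_real_derivative (a - b * fst (x s)) / (norm (x s))^2) (at s)" if "0 < s" for s
  proof -
    have "at s within {0..} = at s"
      using that by (intro at_within_interior) simp
    then show ?thesis
      using d\<theta>[OF less_imp_le[OF that]] unfolding cross_energy_field[OF nz[OF less_imp_le[OF that]]]
      by simp
  qed
  have "\<theta> 0 + 2 * b^2 / a * t \<le> \<theta> t" if "0 \<le> t" for t
  proof (rule DERIV_ge_imp_ge_linear[OF c\<theta> d\<theta>_at _ that])
    show "2 * b^2 / a \<le> (a - b * fst (x s)) / (norm (x s))^2" if "0 < s" for s
      using angular_speed_lower_bound[OF \<open>0 < a\<close> \<open>0 < b\<close> nz trapped(3)] that by simp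
  qed
  with c\<theta> polar show thesis
    by (rule that)
qed

lemma energy_orbit_returns:
  assumes "0 < a" "0 < b" and x: "forward_solution (energy_field a b) x"
    and "x 0 \<noteq> 0" "norm (x 0) < a / (2 * b)"
    and "energy a b (x 0) < a * ln (a / (2 * b)) - a / 2"
  obtains T where "0 < T" "x T = x 0"
proof -
  note trapped = energy_orbit_trapped[OF assms]
  obtain \<theta> where c\<theta>: "continuous_on {0..} \<theta>"
    and polar: "\<And>t. 0 \<le> t \<Longrightarrow> x t = (norm (x t) * cos (\<theta> t), norm (x t) * sin (\<theta> t))"
    and \<theta>_ge: "\<And>t. 0 \<le> t \<Longrightarrow> \<theta> 0 + 2 * b^2 / a * t \<le> \<theta> t"
    using energy_orbit_polar[OF assms] by blast
  define T0 where "T0 = pi * a / b^2"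
  have "0 \<le> T0" "2 * b^2 / a * T0 = 2 * pi"
    using assms(1,2) by (simp_all add: T0_def)
  then have "\<theta> 0 + 2 * pi \<le> \<theta> T0"
    using \<theta>_ge[of T0] by simp
  have "\<exists>T. 0 \<le> T \<and> T \<le> T0 \<and> \<theta> T = \<theta> 0 + 2 * pi"
    by (rule IVT') (use \<open>0 \<le> T0\<close> \<open>\<theta> 0 + 2 * pi \<le> \<theta> T0\<close> continuous_on_subset[OF c\<theta>] in auto)
  then obtain T where "0 \<le> T" "\<theta> T = \<theta> 0 + 2 * pi"
    by blast
  then have "0 < T"
    by (cases "T = 0") simp_all
  define n0 n where "n0 = norm (x 0)" and "n = norm (x T)"
  have x0: "x 0 = (n0 * cos (\<theta> 0), n0 * sin (\<theta> 0))"
    using polar[OF order.refl] unfolding n0_def .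
  have xT: "x T = (n * cos (\<theta> 0), n * sin (\<theta> 0))"
    using polar[OF \<open>0 \<le> T\<close>] unfolding \<open>\<theta> T = \<theta> 0 + 2 * pi\<close> cos_periodic sin_periodic n_def .
  have "n = n0"
  proof (rule strict_mono_on_eqD[OF energy_ray_strict_mono[OF \<open>0 < a\<close> \<open>0 < b\<close>]])
    show "energy a b (n0 * cos (\<theta> 0), n0 * sin (\<theta> 0)) = energy a b (n * cos (\<theta> 0), n * sin (\<theta> 0))"
      using trapped(1)[OF \<open>0 \<le> T\<close>] unfolding x0 xT by simp
    have "a / (2 * b) < a / b"
      using assms(1,2) by (simp add: field_simps)
    then have "n0 < a / b" "n < a / b"
      using trapped(3)[of 0] trapped(3)[OF \<open>0 \<le> T\<close>] unfolding n0_def n_def by linarith+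
    moreover have "0 < n0"
      using \<open>x 0 \<noteq> 0\<close> unfolding n0_def by simp
    moreover have "0 < n"
      using trapped(2)[OF \<open>0 \<le> T\<close>] unfolding n_def by (meson exp_gt_zero less_le_trans)
    ultimately show "n0 \<in> {0<..<a / b}" "n \<in> {0<..<a / b}"
      by auto
  qed
  with \<open>0 < T\<close> show thesis
    using that[of T] unfolding x0 xT by simp
qed

lemma energy_orbit_periodic:
  assumes "0 < a" "0 < b" and x: "forward_solution (energy_field a b) x"
    and "x 0 \<noteq> 0" "norm (x 0) < a / (2 * b)"
    and "energy a b (x 0) < a * ln (a / (2 * b)) - a / 2"
  shows "\<exists>T>0. \<forall>t\<ge>0. x (t + T) = x t"
proof -
  define L where "L = exp ((energy a b (x 0) - a / 2) / a)"
  have "0 < L"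
    by (simp add: L_def)
  obtain T where "0 < T" "x T = x 0"
    using energy_orbit_returns[OF assms] by blast
  moreover have "x t \<in> {y. L \<le> norm y}" if "0 \<le> t" for t
    using energy_orbit_trapped(2)[OF assms that] unfolding L_def by simp
  ultimately have "x (t + T) = x t" if "0 \<le> t" for t
    using forward_solution_periodic[OF energy_field_lipschitz[OF less_imp_le[OF \<open>0 < a\<close>] \<open>0 < L\<close>] x]
      that by simp
  with \<open>0 < T\<close> show ?thesis
    by blast
qed

lemma energy_orbit_radius_lower_bound:
  assumes "0 < a" "0 < b" and x: "forward_solution (energy_field a b) x"
    and "x 0 \<noteq> 0" "norm (x 0) < a / (2 * b)"
    and "energy a b (x 0) < a * ln (a / (2 * b)) - a / 2"
    and "0 \<le> t"
  shows "norm (x 0) * exp (- ((1 + exp 1) * b * norm (x 0) / a)) \<le> norm (x t)"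
proof -
  note trapped = energy_orbit_trapped[OF assms]
  define n0 nt where "n0 = norm (x 0)" and "nt = norm (x t)"
  have "0 < n0" "0 < nt"
    using \<open>x 0 \<noteq> 0\<close> trapped(2) unfolding n0_def nt_def by (auto intro: less_le_trans)
  have "b * n0 < a / 2" "b * nt < a / 2"
    using \<open>norm (x 0) < a / (2 * b)\<close> trapped(3) \<open>0 < b\<close> unfolding n0_def nt_def
    by (simp_all add: pos_less_divide_eq algebra_simps)
  have "a * ln nt - b * nt \<le> a * ln n0 + b * n0" "a * ln n0 - b * n0 \<le> a * ln nt + b * nt"
    using energy_bounds[of b a "x 0"] energy_bounds[of b a "x t"] trapped(1) \<open>0 < b\<close>
    unfolding n0_def nt_def by linarith+
  then have "a * ln nt < a * (ln n0 + 1)"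
    using \<open>b * n0 < a / 2\<close> \<open>b * nt < a / 2\<close> by (simp add: algebra_simps)
  then have "ln nt < ln (n0 * exp 1)"
    using \<open>0 < a\<close> \<open>0 < n0\<close> by (simp add: ln_mult)
  then have "b * nt \<le> b * (n0 * exp 1)"
    using \<open>0 < n0\<close> \<open>0 < nt\<close> \<open>0 < b\<close> by simp
  moreover have "a * (ln n0 - (1 + exp 1) * b * n0 / a) = a * ln n0 - b * n0 - b * (n0 * exp 1)"
    using \<open>0 < a\<close> by (simp add: field_simps)
  ultimately have "a * (ln n0 - (1 + exp 1) * b * n0 / a) \<le> a * ln nt"
    using \<open>a * ln n0 - b * n0 \<le> a * ln nt + b * nt\<close> by linarith
  then have "ln n0 - (1 + exp 1) * b * n0 / a \<le> ln nt"
    using \<open>0 < a\<close> by simp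
  then have "exp (ln n0 - (1 + exp 1) * b * n0 / a) \<le> nt"
    using \<open>0 < nt\<close> by (metis exp_le_cancel_iff exp_ln)
  moreover have "exp (ln n0 - (1 + exp 1) * b * n0 / a) = n0 * exp (- ((1 + exp 1) * b * n0 / a))"
    using \<open>0 < n0\<close> by (simp add: exp_diff exp_minus divide_inverse)
  ultimately show ?thesis
    unfolding n0_def nt_def by simp
qed

lemma small_start_low_energy:
  assumes "0 < a" "0 < b" "y \<noteq> 0" "norm y \<le> a / (2 * b) * exp (- 2)"
  shows "norm y < a / (2 * b)" and "energy a b y < a * ln (a / (2 * b)) - a / 2"
proof -
  define R where "R = a / (2 * b)"
  have "0 < R" "b * R = a / 2"
    using assms(1,2) by (simp_all add: R_def)
  have "R * exp (- 2) < R"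
    using \<open>0 < R\<close> by simp
  then have "norm y < R"
    using assms(4) unfolding R_def by linarith
  then show "norm y < a / (2 * b)"
    unfolding R_def .
  have "b * norm y < a / 2"
    using mult_strict_left_mono[OF \<open>norm y < R\<close> \<open>0 < b\<close>] \<open>b * R = a / 2\<close> by simp
  moreover have "ln (norm y) \<le> ln (R * exp (- 2))"
    using assms(3,4) by (intro ln_mono) (simp_all add: R_def)
  moreover have "ln (R * exp (- 2)) = ln R - 2"
    using \<open>0 < R\<close> by (simp add: ln_mult)
  ultimately show "energy a b y < a * ln (a / (2 * b)) - a / 2"
    using energy_bounds(2)[of b a y] \<open>0 < a\<close> \<open>0 < b\<close> mult_left_mono[of "ln (norm y)" "ln R - 2" a]
    unfolding R_def[symmetric] by (simp add: algebra_simps)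
qed

lemma small_start_exp_energy:
  assumes "0 < a" "0 < b" "y \<noteq> 0" "norm y \<le> a / (2 * b) * exp (- 2)"
  shows "exp (2 * energy a b y / a) < (2 * (a / (2 * b)) / exp 1)^2"
proof -
  define R n where "R = a / (2 * b)" and "n = norm y"
  have "0 < R" "0 < n" "b * n < a / 2"
    using assms small_start_low_energy(1)[OF assms] by (simp_all add: R_def n_def field_simps)
  have "2 * energy a b y / a \<le> 2 * ln n + 2 * b * n / a"
    using energy_bounds(2)[of b a y] \<open>0 < a\<close> \<open>0 < b\<close> unfolding n_def by (simp add: field_simps)
  also have "\<dots> < 2 * ln n + 1"
    using \<open>b * n < a / 2\<close> \<open>0 < a\<close> by (simp add: field_simps)
  finally have "exp (2 * energy a b y / a) < exp (2 * ln n + 1)"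
    by simp
  also have "\<dots> = exp (ln (n^2)) * exp 1"
    using \<open>0 < n\<close> by (simp add: ln_realpow exp_add)
  also have "\<dots> = n^2 * exp 1"
    using \<open>0 < n\<close> by (subst exp_ln) simp_all
  also have "\<dots> \<le> (R * exp (- 2))^2 * exp 1"
    using assms(4) \<open>0 < n\<close> unfolding R_def n_def by (intro mult_right_mono power_mono) auto
  also have "\<dots> < (2 * R / exp 1)^2"
  proof -
    have "exp (3 :: real) < 4 * exp 4"
      using exp_less_mono[of 3 4] exp_gt_zero[of 4] by linarith
    then show ?thesis
      using \<open>0 < R\<close> by (simp add: exp_minus field_simps power2_eq_square mult_exp_exp)
  qed
  finally show ?thesis
    unfolding R_def .
qed

section \<open>Separation of the vortices\<close>

lemma norm_diagonal_scaling:
  fixes v :: "real \<times> real"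
  assumes "0 < c" "c \<le> C"
  shows "c * norm v \<le> norm (C * fst v, c * snd v)" and "norm (C * fst v, c * snd v) \<le> C * norm v"
proof -
  have "c^2 \<le> C^2"
    using assms by (simp add: power_mono)
  then have "c^2 * (fst v)^2 \<le> C^2 * (fst v)^2" "c^2 * (snd v)^2 \<le> C^2 * (snd v)^2"
    by (simp_all add: mult_right_mono)
  then have "(c * norm v)^2 \<le> (norm (C * fst v, c * snd v))^2"
    "(norm (C * fst v, c * snd v))^2 \<le> (C * norm v)^2"
    by (simp_all add: power2_norm_prod[of v] power2_norm_prod[of "(_, _)"] algebra_simps)
  then show "c * norm v \<le> norm (C * fst v, c * snd v)" "norm (C * fst v, c * snd v) \<le> C * norm v"
    using assms by (auto intro: power2_le_imp_le)
qed

lemma c0_pos: "0 < c0 h r0"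
  by (simp add: c0_def tau_def)

lemma c0_le_C0: "0 < h \<Longrightarrow> c0 h r0 \<le> C0 h r0"
  unfolding C0_def c0_def tau_def by (simp add: add_pos_nonneg)

lemma c0_div_C0:
  assumes "0 < h"
  shows "c0 h r0 / C0 h r0 = (h^2 + h * sqrt (h^2 + r0^2)) / (r0^2 + h^2 + h * sqrt (h^2 + r0^2))"
proof -
  define D where "D = h^2 + h * sqrt (h^2 + r0^2)"
  have "0 < D"
    using assms by (simp add: D_def add_pos_nonneg)
  have "c0 h r0 / C0 h r0 = 1 / (1 + r0^2 / D)"
    unfolding C0_def c0_def D_def tau_def by simp
  also have "\<dots> = D / (r0^2 + D)"
    using \<open>0 < D\<close> by (simp add: field_simps)
  finally show ?thesis
    by (simp add: D_def add.assoc)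
qed

lemma A_const_pos: "0 < h \<Longrightarrow> 0 < r0 \<Longrightarrow> 0 < A_const h r0"
  unfolding A_const_def by (intro divide_pos_pos mult_pos_pos add_pos_nonneg) (auto simp: add_pos_pos)

lemma B_const_pos: "0 < h \<Longrightarrow> 0 < r0 \<Longrightarrow> 0 < B_const h r0"
  unfolding B_const_def tau_def by (intro divide_pos_pos mult_pos_pos) (auto simp: add_pos_nonneg)

lemma Ham_field_eq_energy_field:
  "Ham_field h r0 a1 a2 = energy_field ((a1 + a2) * A_const h r0) ((a1 - a2) * B_const h r0)"
  by (simp add: fun_eq_iff Ham_field_def energy_field_def)

lemma Ham_eq_energy: "Ham h r0 a1 a2 = energy ((a1 + a2) * A_const h r0) ((a1 - a2) * B_const h r0)"
  by (simp add: fun_eq_iff Ham_def energy_def)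

lemma C_star_eq:
  "C_star h r0 a1 a2 = (2 * ((a1 + a2) * A_const h r0 / (2 * ((a1 - a2) * B_const h r0))) / exp 1)^2"
  by (simp only: C_star_def a_prime_def mult.assoc)

lemma exp_loss_bound:
  fixes k c \<beta> C r n :: real
  assumes "0 \<le> k" "0 < c" "0 < \<beta>" "0 < C" "0 \<le> r" "c * r \<le> n" "n \<le> C * r"
    and "k * (C * r) \<le> ln (c / (\<beta> * C))"
  shows "\<beta> * C * r \<le> n * exp (- (k * n))"
proof -
  have "0 \<le> c * r"
    using assms by simp
  then have "0 \<le> n"
    using assms(6) by linarith
  have "k * n \<le> k * (C * r)"
    using assms by (intro mult_left_mono) auto
  then have "exp (- ln (c / (\<beta> * C))) \<le> exp (- (k * n))"
    using assms(8) by simp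
  moreover have "exp (- ln (c / (\<beta> * C))) = \<beta> * C / c"
    using assms by (simp add: exp_minus)
  ultimately have "c * r * (\<beta> * C / c) \<le> n * exp (- (k * n))"
    using assms \<open>0 \<le> n\<close> by (intro mult_mono) simp_all
  then show ?thesis
    using \<open>0 < c\<close> by (simp add: ac_simps)
qed

text \<open>The first constraint on \<open>\<delta>\<close> puts the start deep inside the trapping disc, the second
  limits the loss factor of the radius bound to \<open>\<beta> C / c\<close>.\<close>

lemma small_orbit_separation:
  assumes "0 < a" "0 < b" "0 < c" "c \<le> C" "0 < \<beta>" "\<beta> * C < c"
  obtains \<delta> where "0 < \<delta>"
    and "\<And>v x. 0 < norm v \<Longrightarrow> norm v < \<delta> \<Longrightarrow> forward_solution (energy_field a b) x \<Longrightarrow>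
      x 0 = (C * fst v, c * snd v) \<Longrightarrow>
      exp (2 * energy a b (x 0) / a) < (2 * (a / (2 * b)) / exp 1)^2 \<and>
      (\<exists>T>0. \<forall>t\<ge>0. x (t + T) = x t) \<and>
      (\<forall>t\<ge>0. \<beta> * norm v \<le> norm (fst (x t) / C, snd (x t) / c))"
proof
  define k \<kappa> where "k = (1 + exp 1) * b / a" and "\<kappa> = ln (c / (\<beta> * C))"
  define \<delta> where "\<delta> = min (a / (2 * b) * exp (- 2)) (\<kappa> / k) / C"
  have "0 < k" "0 < C" "0 < \<kappa>"
    using assms by (simp_all add: k_def \<kappa>_def field_simps add_pos_pos)
  then show "0 < \<delta>"
    using assms by (simp add: \<delta>_def)
  fix v :: "real \<times> real" and x
  assume v: "0 < norm v" "norm v < \<delta>" and x: "forward_solution (energy_field a b) x"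
    and x0: "x 0 = (C * fst v, c * snd v)"
  define n0 where "n0 = norm (x 0)"
  have n0: "c * norm v \<le> n0" "n0 \<le> C * norm v"
    using norm_diagonal_scaling[OF \<open>0 < c\<close> \<open>c \<le> C\<close>, of v] unfolding n0_def x0 by simp_all
  have "0 < c * norm v"
    using v(1) \<open>0 < c\<close> by simp
  then have "x 0 \<noteq> 0"
    using n0(1) unfolding n0_def by auto
  have "C * norm v \<le> a / (2 * b) * exp (- 2)" "C * norm v \<le> \<kappa> / k"
    using v(2) \<open>0 < C\<close> unfolding \<delta>_def by (simp_all add: pos_less_divide_eq mult.commute)
  then have small: "norm (x 0) \<le> a / (2 * b) * exp (- 2)" and "k * (C * norm v) \<le> \<kappa>"
    using n0(2) \<open>0 < k\<close> unfolding n0_def by (simp_all add: pos_le_divide_eq mult.commute)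
  note low = small_start_low_energy[OF \<open>0 < a\<close> \<open>0 < b\<close> \<open>x 0 \<noteq> 0\<close> small]
  have loss: "\<beta> * C * norm v \<le> n0 * exp (- (k * n0))"
    using \<open>k * (C * norm v) \<le> \<kappa>\<close> \<open>0 < k\<close> \<open>0 < C\<close> n0 assms unfolding \<kappa>_def
    by (intro exp_loss_bound) auto
  have "\<beta> * norm v \<le> norm (fst (x t) / C, snd (x t) / c)" if "0 \<le> t" for t
  proof -
    have "C * (\<beta> * norm v) \<le> n0 * exp (- (k * n0))"
      using loss by (simp add: mult.assoc mult.left_commute[of \<beta>])
    also have "\<dots> \<le> norm (x t)"
      using energy_orbit_radius_lower_bound[OF \<open>0 < a\<close> \<open>0 < b\<close> x \<open>x 0 \<noteq> 0\<close> low that]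
      unfolding n0_def k_def by simp
    also have "\<dots> \<le> C * norm (fst (x t) / C, snd (x t) / c)"
      using norm_diagonal_scaling(2)[OF \<open>0 < c\<close> \<open>c \<le> C\<close>, of "(fst (x t) / C, snd (x t) / c)"]
        \<open>0 < C\<close> \<open>0 < c\<close> by simp
    finally show ?thesis
      using \<open>0 < C\<close> by simp
  qed
  then show "exp (2 * energy a b (x 0) / a) < (2 * (a / (2 * b)) / exp 1)^2 \<and>
      (\<exists>T>0. \<forall>t\<ge>0. x (t + T) = x t) \<and>
      (\<forall>t\<ge>0. \<beta> * norm v \<le> norm (fst (x t) / C, snd (x t) / c))"
    using small_start_exp_energy[OF \<open>0 < a\<close> \<open>0 < b\<close> \<open>x 0 \<noteq> 0\<close> small]
      energy_orbit_periodic[OF \<open>0 < a\<close> \<open>0 < b\<close> x \<open>x 0 \<noteq> 0\<close> low] by blast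
qed

lemma vortex_pair_separation:
  assumes "0 < h" "0 < r0" "\<bar>a2\<bar> < a1" "0 < beta"
    and "beta < (h^2 + h * sqrt (h^2 + r0^2)) / (r0^2 + h^2 + h * sqrt (h^2 + r0^2))"
  obtains \<delta> where "0 < \<delta>"
    and "\<And>v x. 0 < norm v \<Longrightarrow> norm v < \<delta> \<Longrightarrow> forward_solution (Ham_field h r0 a1 a2) x \<Longrightarrow>
      x 0 = DT h r0 v \<Longrightarrow>
      exp (2 * Ham h r0 a1 a2 (x 0) / ((a1 + a2) * A_const h r0)) < C_star h r0 a1 a2 \<and>
      (\<exists>T>0. \<forall>t\<ge>0. x (t + T) = x t) \<and>
      (\<forall>t\<ge>0. beta * norm v \<le> norm (DT_inv h r0 (x t)))"
proof -
  define a b where "a = (a1 + a2) * A_const h r0" and "b = (a1 - a2) * B_const h r0"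
  have "0 < a" "0 < b"
    using assms A_const_pos B_const_pos unfolding a_def b_def by auto
  have "0 < C0 h r0"
    using c0_pos[of h r0] c0_le_C0[OF assms(1), of r0] by linarith
  moreover have "beta < c0 h r0 / C0 h r0"
    using assms(5) unfolding c0_div_C0[OF assms(1)] .
  ultimately have "beta * C0 h r0 < c0 h r0"
    by (simp add: pos_less_divide_eq)
  from small_orbit_separation[OF \<open>0 < a\<close> \<open>0 < b\<close> c0_pos c0_le_C0[OF assms(1)] assms(4) this]
  show ?thesis
    using that unfolding Ham_field_eq_energy_field Ham_eq_energy C_star_eq DT_def DT_inv_def
      a_def[symmetric] b_def[symmetric] by metis
qed

theorem lemma5p1:
  fixes h r0 a1 a2 rho0 beta :: real
  assumes "h > 0" and "r0 > 0" and "a1 > \<bar>a2\<bar>" and "rho0 > 0"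
    and "beta > 0"
    and "beta < (h^2 + h * sqrt (h^2 + r0^2)) / (r0^2 + h^2 + h * sqrt (h^2 + r0^2))"
  shows "\<forall>k::nat. \<exists>N0::nat. \<forall>n::nat. n > N0 \<longrightarrow>
    (\<forall>(P1::real \<times> real) (P2::real \<times> real) (x::real \<Rightarrow> real \<times> real).
      dist P1 P2 = 4 * rho0 / real n \<longrightarrow>
      x 0 = DT h r0 (P1 - P2) \<longrightarrow>
      (\<forall>t\<ge>0. (x has_vector_derivative Ham_field h r0 a1 a2 (x t)) (at t within {0..})) \<longrightarrow>
      (let rho = beta * rho0 / real n;
           E = Ham h r0 a1 a2 (x 0);
           CE = exp (2 * E / ((a1 + a2) * A_const h r0))
       in CE < C_star h r0 a1 a2 \<and>
          (\<exists>TE > 0. (\<forall>t\<ge>0. x (t + TE) = x t) \<and>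
             (\<forall>t\<in>{0..real (k + 1) * TE}. norm (DT_inv h r0 (x t)) \<ge> 4 * rho))))"
proof -
  obtain \<delta> where "0 < \<delta>" and separation: "\<And>v x. 0 < norm v \<Longrightarrow> norm v < \<delta> \<Longrightarrow>
      forward_solution (Ham_field h r0 a1 a2) x \<Longrightarrow> x 0 = DT h r0 v \<Longrightarrow>
      exp (2 * Ham h r0 a1 a2 (x 0) / ((a1 + a2) * A_const h r0)) < C_star h r0 a1 a2 \<and>
      (\<exists>T>0. \<forall>t\<ge>0. x (t + T) = x t) \<and> (\<forall>t\<ge>0. beta * norm v \<le> norm (DT_inv h r0 (x t)))"
    using vortex_pair_separation[OF assms(1-3,5,6)] by blast
  obtain N0 where N0: "\<And>n. N0 \<le> n \<Longrightarrow> 4 * rho0 / real n < \<delta>"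
    using order_tendstoD(2)[OF lim_const_over_n \<open>0 < \<delta>\<close>] unfolding eventually_sequentially by blast
  show ?thesis
  proof (intro allI exI[of _ N0] impI)
    fix k n :: nat and P1 P2 :: "real \<times> real" and x :: "real \<Rightarrow> real \<times> real"
    assume "N0 < n" "dist P1 P2 = 4 * rho0 / real n" "x 0 = DT h r0 (P1 - P2)"
      and "\<forall>t\<ge>0. (x has_vector_derivative Ham_field h r0 a1 a2 (x t)) (at t within {0..})"
    moreover have "0 < norm (P1 - P2)" "norm (P1 - P2) < \<delta>"
      using \<open>N0 < n\<close> N0[of n] \<open>dist P1 P2 = 4 * rho0 / real n\<close> assms(4) by (simp_all add: dist_norm)
    ultimately have "exp (2 * Ham h r0 a1 a2 (x 0) / ((a1 + a2) * A_const h r0)) < C_star h r0 a1 a2 \<and>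
        (\<exists>T>0. \<forall>t\<ge>0. x (t + T) = x t) \<and> (\<forall>t\<ge>0. beta * norm (P1 - P2) \<le> norm (DT_inv h r0 (x t)))"
      using separation[of "P1 - P2" x] unfolding forward_solution_def by blast
    moreover have "4 * (beta * rho0 / real n) = beta * norm (P1 - P2)"
      using \<open>dist P1 P2 = 4 * rho0 / real n\<close> by (simp add: dist_norm)
    ultimately show "let rho = beta * rho0 / real n; E = Ham h r0 a1 a2 (x 0);
          CE = exp (2 * E / ((a1 + a2) * A_const h r0))
       in CE < C_star h r0 a1 a2 \<and> (\<exists>TE > 0. (\<forall>t\<ge>0. x (t + TE) = x t) \<and>
             (\<forall>t\<in>{0..real (k + 1) * TE}. norm (DT_inv h r0 (x t)) \<ge> 4 * rho))"
      unfolding Let_def by auto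
  qed
qed

end
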